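(* Let $q$ be a power of a prime $p$. Let $a,d$ be positive integers and $s\ge1$ such that $L=\{a,a+d,\ldots,a+(s-1)d\}\subseteq[q-1]$. Let $\mathcal{F}\subseteq 2^{[n]}$ be $q$-modular $L$-differencing Sperner. If $$\sum_{\ell\in L}v_p(\ell)<\max\{(s-1)v_p(d)+v_p(q),\; s\,v_p(d)+v_p(s!)+1\},$$ then $|\mathcal{F}|\le\sum_{i=0}^{s}\binom{n}{i}$.
   Context: $[n]=\{1,\ldots,n\}$, $[q-1]=\{1,\ldots,q-1\}$, and $2^{[n]}$ is the family of all subsets of $[n]$. For a prime $p$ and integer $m$, $v_p(m)$ is the largest nonnegative integer $k$ with $p^k\mid m$ ($v_p(0)=+\infty$). For a positive integer $m$ and $L\subseteq\mathbb{Z}$, write $r\in L\pmod m$ if $r\equiv\ell\pmod m$ for some $\ell\in L$. For $L\subseteq[q-1]$, a family $\mathcal{F}\subseteq 2^{[n]}$ is $q$-modular $L$-differencing Sperner if $|A\setminus B|\in L\pmod q$ for all distinct $A,B\in\mathcal{F}$. *)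

theory Defs
  imports "HOL-Computational_Algebra.Computational_Algebra" "HOL-Number_Theory.Number_Theory"
begin

text \<open>The p-adic valuation v_p(m) for positive m is the library's multiplicity p m.\<close>

definition in_mod :: "nat \<Rightarrow> nat set \<Rightarrow> nat \<Rightarrow> bool" where
  "in_mod r L m \<longleftrightarrow> (\<exists>l\<in>L. [r = l] (mod m))"

definition modular_L_differencing_sperner ::
  "nat \<Rightarrow> nat \<Rightarrow> nat set \<Rightarrow> nat set set \<Rightarrow> bool" where
  "modular_L_differencing_sperner n q L F \<longleftrightarrow>
     F \<subseteq> Pow {1..n} \<and>
     (\<forall>A\<in>F. \<forall>B\<in>F. A \<noteq> B \<longrightarrow> in_mod (card (A - B)) L q)"

end

theory Submission
  imports Defs "HOL-Library.Function_Algebras"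
begin

text \<open>
  The polynomial method, made \<open>p\<close>-adic. For \<open>A \<in> F\<close> let \<open>f_A(B) = \<Prod>j<s. |A - B| - a - j d\<close>.
  Being a polynomial of degree \<open>s\<close> in \<open>|A - B|\<close>, each \<open>f_A\<close> lies in the span of the indicators
  \<open>B \<mapsto> [S \<subseteq> B]\<close> with \<open>S \<subseteq> [n]\<close> and \<open>|S| \<le> s\<close>. The diagonal value \<open>f_A(A) = \<plusminus>\<Prod>l\<in>L. l\<close> has
  \<open>p\<close>-adic valuation exactly \<open>V = \<Sum>l\<in>L. v_p(l)\<close>. For \<open>A \<noteq> B\<close> we have \<open>|A - B| \<equiv> a + i0 d (mod q)\<close>
  for some \<open>i0 < s\<close>, and the hypothesis on \<open>V\<close> makes \<open>p^(V+1)\<close> divide \<open>f_A(B)\<close>: either the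
  factor \<open>i0\<close> contributes \<open>v_p(q)\<close> and every other factor \<open>v_p(d)\<close>, or the factors divided by
  \<open>p^v_p(d)\<close> form a progression of length \<open>s < p^(v_p(q) - v_p(d))\<close> whose product has valuation
  above \<open>v_p(s!)\<close>. A matrix whose off-diagonal entries are \<open>p\<close>-adically smaller than its diagonal
  ones is nonsingular, so the \<open>f_A\<close> are linearly independent.
\<close>

section \<open>Products over arithmetic progressions\<close>

lemma prime_dvd_prime_power_choose:
  fixes p m j :: nat
  assumes "prime p" and "0 < j" and "j < p ^ m"
  shows "p dvd (p ^ m choose j)"
proof (rule ccontr)
  assume "\<not> p dvd (p ^ m choose j)"
  then have "coprime (p ^ m) (p ^ m choose j)"
    using assms(1) by (simp add: prime_imp_coprime coprime_commute)
  moreover have "j * (p ^ m choose j) = p ^ m * (p ^ m - 1 choose (j - 1))"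
    using assms(2) times_binomial_minus1_eq by blast
  then have "p ^ m dvd j * (p ^ m choose j)" by simp
  ultimately have "p ^ m dvd j" using coprime_dvd_mult_left_iff by blast
  then show False using assms(2,3) by (meson dvd_imp_le not_le)
qed

lemma prime_dvd_choose_if_mod_less:
  fixes p m w s :: nat
  assumes p: "prime p" and "w mod p ^ m < s" and "s < p ^ m"
  shows "p dvd (w choose s)"
proof -
  define i where "i = w mod p ^ m"
  have "p dvd ((p ^ m * t + i) choose s)" for t
  proof (induction t)
    case 0
    then show ?case using assms(2) by (simp add: i_def binomial_eq_0)
  next
    case (Suc t)
    define w' where "w' = p ^ m * t + i"
    have "(p ^ m * Suc t + i) choose s = (\<Sum>j\<le>s. (p ^ m choose j) * (w' choose (s - j)))"
      by (simp add: w'_def add.assoc vandermonde)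
    also have "p dvd \<dots>"
    proof (rule dvd_sum)
      fix j assume "j \<in> {..s}"
      then show "p dvd (p ^ m choose j) * (w' choose (s - j))"
        using Suc.IH prime_dvd_prime_power_choose[OF p, of j m] assms(3)
        by (cases "j = 0") (auto simp: w'_def)
    qed
    finally show ?case .
  qed
  then show ?thesis
    by (metis i_def div_mult_mod_eq mult.commute)
qed

lemma prod_int_diff_eq_fact_mult_choose:
  "(\<Prod>j<s. int w - int j) = int (fact s * (w choose s))"
proof -
  have "(of_int (\<Prod>j<s. int w - int j) :: rat) = (\<Prod>j = 0..<s. of_nat w - of_nat j)"
    by (simp add: atLeast0LessThan)
  also have "\<dots> = fact s * (of_nat w gchoose s)" by (simp add: gbinomial_mult_fact)
  also have "\<dots> = of_int (int (fact s * (w choose s)))" by (simp add: binomial_gbinomial)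
  finally show ?thesis by (simp only: of_int_eq_iff)
qed

lemma prod_progression_cong_fact_mult_choose:
  fixes d u M :: int
  assumes "[d * int w = u] (mod M)"
  shows "[(\<Prod>j<s. u - int j * d) = d ^ s * int (fact s * (w choose s))] (mod M)"
proof -
  have "[(\<Prod>j<s. u - int j * d) = (\<Prod>j<s. d * (int w - int j))] (mod M)"
    by (rule cong_prod) (use assms in \<open>auto simp: algebra_simps intro: cong_diff cong_sym\<close>)
  also have "(\<Prod>j<s. d * (int w - int j)) = d ^ s * int (fact s * (w choose s))"
    by (simp add: prod.distrib prod_int_diff_eq_fact_mult_choose)
  finally show ?thesis .
qed

text \<open>Modulo a high power of \<open>p\<close> we may write \<open>u \<equiv> w d\<close> with \<open>w \<equiv> i0 (mod p^m)\<close>; then the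
  product is \<open>d^s s! \<binom>w s\<close>, and \<open>\<binom>w s\<close> contributes the extra factor \<open>p\<close>.\<close>
lemma prime_power_dvd_prod_progression_coprime:
  fixes p m i0 s :: nat and d u :: int
  assumes p: "prime p" and nd: "\<not> int p dvd d" and cu: "[u = int i0 * d] (mod int p ^ m)"
    and "i0 < s" and "s < p ^ m"
  shows "int p ^ (multiplicity p (fact s :: nat) + 1) dvd (\<Prod>j<s. u - int j * d)"
proof -
  define N where "N = multiplicity p (fact s :: nat) + 1"
  define M where "M = int p ^ (N + m)"
  have M0: "M > 0" using p by (simp add: M_def prime_gt_0_nat)
  have "coprime (int p) d" using nd p by (simp add: prime_imp_coprime)
  then have cop: "coprime d (int p ^ n)" for n by (simp add: coprime_commute)
  obtain iv where iv: "[d * iv = 1] (mod M)"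
    using cong_solve_coprime_int cop unfolding M_def by blast
  define w where "w = nat ((u * iv) mod M)"
  have "[int w = u * iv] (mod M)" using M0 by (simp add: w_def cong_def)
  then have "[d * int w = d * iv * u] (mod M)" by (metis cong_scalar_left mult.assoc mult.commute)
  also have "[d * iv * u = 1 * u] (mod M)" using iv by (rule cong_scalar_right)
  finally have wu: "[d * int w = u] (mod M)" by simp
  have "int p ^ m dvd M" by (simp add: M_def le_imp_power_dvd)
  then have "[d * int w = d * int i0] (mod int p ^ m)"
    using cong_dvd_modulus[OF wu] cu by (metis cong_trans mult.commute)
  then have "[int w = int i0] (mod int p ^ m)" using cop cong_mult_lcancel by blast
  then have "w mod p ^ m = i0" using assms(4,5)
    by (metis cong_int_iff cong_def mod_less of_nat_power less_trans)
  then have "p dvd (w choose s)" using prime_dvd_choose_if_mod_less[OF p, of w m s] assms(4,5) by simp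
  moreover have "p ^ (N - 1) dvd (fact s :: nat)" by (simp add: N_def multiplicity_dvd)
  ultimately have "p ^ (N - 1) * p dvd fact s * (w choose s)" by (simp add: mult_dvd_mono)
  then have "int p ^ N dvd d ^ s * int (fact s * (w choose s))"
    by (metis N_def add_diff_cancel_right' dvd_mult of_nat_dvd_iff of_nat_power power_Suc2 Suc_eq_plus1)
  moreover have "[(\<Prod>j<s. u - int j * d) = d ^ s * int (fact s * (w choose s))] (mod int p ^ N)"
    using prod_progression_cong_fact_mult_choose[OF wu]
    by (rule cong_dvd_modulus) (simp add: M_def le_imp_power_dvd)
  ultimately show ?thesis using cong_dvd_iff N_def by blast
qed

lemma pow_dvd_prod_of_dvd_factors:
  fixes f :: "nat \<Rightarrow> 'a::comm_semiring_1"
  assumes "i0 < s" and "c ^ k dvd f i0" and "\<And>j. j < s \<Longrightarrow> j \<noteq> i0 \<Longrightarrow> c ^ e dvd f j"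
  shows "c ^ ((s - 1) * e + k) dvd (\<Prod>j<s. f j)"
proof -
  have "(\<Prod>j\<in>{..<s} - {i0}. c ^ e) dvd (\<Prod>j\<in>{..<s} - {i0}. f j)"
    using assms(3) by (intro prod_dvd_prod) auto
  then have "c ^ ((s - 1) * e) dvd (\<Prod>j\<in>{..<s} - {i0}. f j)"
    using assms(1) by (simp add: power_mult mult.commute)
  then have "c ^ k * c ^ ((s - 1) * e) dvd f i0 * (\<Prod>j\<in>{..<s} - {i0}. f j)"
    using assms(2) mult_dvd_mono by blast
  then show ?thesis using assms(1) by (simp add: prod.remove power_add mult.commute)
qed

lemma prime_power_dvd_prod_progression_scaled:
  fixes p e m i0 s :: nat and x d :: int
  assumes p: "prime p" and nd: "\<not> int p dvd d"
    and cx: "[x = int i0 * (int p ^ e * d)] (mod int p ^ (e + m))"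
    and "i0 < s" and "s < p ^ m"
  shows "int p ^ (s * e + multiplicity p (fact s :: nat) + 1) dvd (\<Prod>j<s. x - int j * (int p ^ e * d))"
proof -
  define P where "P = int p"
  have P0: "P \<noteq> 0" using p by (simp add: P_def)
  have "P ^ e dvd x - int i0 * (P ^ e * d)"
    using cx by (simp add: P_def cong_iff_dvd_diff power_add dvd_mult_left)
  then have "P ^ e dvd x" by (metis dvd_add dvd_mult diff_add_cancel dvd_triv_left)
  then obtain u where xu: "x = P ^ e * u" by (elim dvdE)
  have "P ^ e * P ^ m dvd P ^ e * (u - int i0 * d)"
    using cx by (simp add: P_def xu cong_iff_dvd_diff power_add algebra_simps)
  then have "[u = int i0 * d] (mod P ^ m)" using P0 by (simp add: cong_iff_dvd_diff)
  then have "P ^ (multiplicity p (fact s :: nat) + 1) dvd (\<Prod>j<s. u - int j * d)"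
    using prime_power_dvd_prod_progression_coprime[OF p nd _ assms(4,5)] by (simp add: P_def)
  moreover have "(\<Prod>j<s. x - int j * (P ^ e * d)) = (\<Prod>j<s. P ^ e * (u - int j * d))"
    by (simp add: xu algebra_simps)
  then have "(\<Prod>j<s. x - int j * (P ^ e * d)) = P ^ (s * e) * (\<Prod>j<s. u - int j * d)"
    by (simp add: prod.distrib power_mult mult.commute)
  ultimately show ?thesis by (simp add: P_def power_add mult_dvd_mono)
qed

lemma progression_length_lt_prime_power:
  fixes p a d e m s :: nat
  assumes p: "prime p" and "a > 0" and "d > 0" and "s \<ge> 1" and "p ^ e dvd d"
    and below: "a + (s - 1) * d < p ^ (e + m)"
    and many: "(s - 1) * e + (e + m) \<le> (\<Sum>i<s. multiplicity p (a + i * d))"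
  shows "s < p ^ m"
proof -
  have "p ^ e \<le> d" using assms(3,5) by (simp add: dvd_imp_le)
  then have "(s - 1) * p ^ e \<le> (s - 1) * d" by (rule mult_le_mono2)
  then have step: "(s - 1) * p ^ e + a < p ^ e * p ^ m"
    using below unfolding power_add by linarith
  have "s \<le> p ^ m"
  proof (rule ccontr)
    assume "\<not> s \<le> p ^ m"
    then have "p ^ m \<le> s - 1" by simp
    then have "p ^ e * p ^ m \<le> (s - 1) * p ^ e" by (metis mult_le_mono1 mult.commute)
    then show False using step by linarith
  qed
  moreover have "s \<noteq> p ^ m"
  proof
    assume s: "s = p ^ m"
    then have "(s - 1) * p ^ e + p ^ e = p ^ e * p ^ m"
      using assms(4) by (metis Suc_diff_le diff_Suc_1 mult.commute mult_Suc add.commute)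
    then have "a < p ^ e" using step by linarith
    have "multiplicity p (a + i * d) < e" for i
    proof (rule multiplicity_lessI)
      show "\<not> p ^ e dvd a + i * d"
        using \<open>a < p ^ e\<close> assms(2,5) by (auto simp: dvd_add_left_iff dest: dvd_imp_le)
    qed (use assms(2) p in auto)
    then have "(\<Sum>i<s. multiplicity p (a + i * d)) < (\<Sum>i<s. e)"
      using assms(4) by (intro sum_strict_mono) (auto simp: lessThan_empty_iff)
    then show False using many assms(4) by (cases s) auto
  qed
  ultimately show ?thesis by simp
qed

lemma pow_dvd_prod_progression_of_cong:
  fixes c x d :: int and e k i0 s :: nat
  assumes "[x = int i0 * d] (mod c ^ k)" and "c ^ e dvd d" and "e \<le> k" and "i0 < s"
  shows "c ^ ((s - 1) * e + k) dvd (\<Prod>j<s. x - int j * d)"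
proof -
  have "c ^ e dvd x - int i0 * d"
    using assms(1,3) by (meson cong_iff_dvd_diff dvd_trans le_imp_power_dvd)
  then have "c ^ e dvd x" using assms(2) by (metis dvd_add dvd_mult diff_add_cancel)
  then have "c ^ e dvd x - int j * d" for j using assms(2) by (simp add: dvd_diff)
  then show ?thesis
    using assms(1,4) by (intro pow_dvd_prod_of_dvd_factors) (auto simp: cong_iff_dvd_diff)
qed

lemma prime_power_dvd_prod_progression:
  fixes p k a d s i0 y :: nat
  defines "V \<equiv> (\<Sum>i<s. multiplicity p (a + i * d))"
  assumes p: "prime p" and a: "a > 0" and d: "d > 0" and s: "s \<ge> 1"
    and below: "a + (s - 1) * d < p ^ k"
    and hyp: "V < max ((s - 1) * multiplicity p d + k)
                      (s * multiplicity p d + multiplicity p (fact s) + 1)"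
    and i0: "i0 < s" and cy: "[y = a + i0 * d] (mod p ^ k)"
  shows "int p ^ (V + 1) dvd (\<Prod>j<s. int y - int (a + j * d))"
proof -
  define P where "P = int p"
  define e where "e = multiplicity p d"
  define x where "x = int y - int a"
  obtain d' where dd: "d = p ^ e * d'" and nd: "\<not> p dvd d'"
    using multiplicity_decompose'[of d p] d prime_gt_1_nat[OF p] unfolding e_def by auto
  have Ped: "int d = P ^ e * int d'" by (simp add: P_def dd)
  have "[int y = int a + int i0 * int d] (mod P ^ k)"
    using cy unfolding P_def by (metis cong_int_iff of_nat_add of_nat_mult of_nat_power)
  then have cx: "[x = int i0 * int d] (mod P ^ k)"
    unfolding x_def by (metis cong_diff cong_refl add_diff_cancel_left')
  have "(\<Prod>j<s. int y - int (a + j * d)) = (\<Prod>j<s. x - int j * int d)"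
    by (simp add: x_def algebra_simps)
  moreover have "P ^ (V + 1) dvd (\<Prod>j<s. x - int j * int d)"
  proof (cases "s = 1")
    case True
    then have "\<not> p ^ k dvd a" using below a by (auto dest: dvd_imp_le)
    then have "multiplicity p a < k" using a p by (intro multiplicity_lessI) auto
    then have "P ^ (V + 1) dvd P ^ k" using True by (intro le_imp_power_dvd) (simp add: V_def)
    moreover have "P ^ k dvd (\<Prod>j<s. x - int j * int d)"
      using True i0 cx by (simp add: cong_iff_dvd_diff)
    ultimately show ?thesis by (rule dvd_trans)
  next
    case False
    have "p ^ e \<le> d" using dd d by (simp add: dvd_imp_le)
    also have "d \<le> (s - 1) * d" using s False by (simp add: Suc_le_eq)
    finally have "p ^ e < p ^ k" using below by linarith
    then have "e < k" using prime_gt_1_nat[OF p] power_less_imp_less_exp by blast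
    consider "V < (s - 1) * e + k" | "(s - 1) * e + k \<le> V" "V < s * e + multiplicity p (fact s) + 1"
      using hyp unfolding e_def by linarith
    then show ?thesis
    proof cases
      case 1
      have "P ^ ((s - 1) * e + k) dvd (\<Prod>j<s. x - int j * int d)"
        using pow_dvd_prod_progression_of_cong[OF cx _ _ i0, of e] \<open>e < k\<close> Ped by simp
      moreover have "P ^ (V + 1) dvd P ^ ((s - 1) * e + k)" using 1 by (intro le_imp_power_dvd) simp
      ultimately show ?thesis using dvd_trans by blast
    next
      case 2
      define m where "m = k - e"
      have km: "k = e + m" using \<open>e < k\<close> by (simp add: m_def)
      have "s < p ^ m"
        using progression_length_lt_prime_power[OF p a d s, of e m] below 2(1) km
        by (simp add: dd V_def)
      then have "P ^ (s * e + multiplicity p (fact s) + 1) dvd (\<Prod>j<s. x - int j * int d)"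
        using prime_power_dvd_prod_progression_scaled[OF p, where d = "int d'" and e = e and m = m]
          nd cx i0 km Ped
        by (simp add: P_def)
      moreover have "P ^ (V + 1) dvd P ^ (s * e + multiplicity p (fact s) + 1)"
        using 2(2) by (intro le_imp_power_dvd) simp
      ultimately show ?thesis using dvd_trans by blast
    qed
  qed
  ultimately show ?thesis by (simp add: P_def)
qed

lemma prime_power_exactly_dvd_prod_progression:
  fixes p a d s :: nat
  defines "V \<equiv> (\<Sum>i<s. multiplicity p (a + i * d))"
  assumes p: "prime p" and a: "a > 0"
  shows "int p ^ V dvd (\<Prod>j<s. int (a + j * d))"
    and "\<not> int p ^ (V + 1) dvd (\<Prod>j<s. int (a + j * d))"
proof -
  define N where "N = (\<Prod>j<s. a + j * d)"
  have "N \<noteq> 0" using a by (simp add: N_def)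
  have mult_N: "multiplicity p N = V"
    using p a unfolding N_def V_def by (subst prime_elem_multiplicity_prod_distrib) auto
  have "p ^ V dvd N" unfolding mult_N[symmetric] by (rule multiplicity_dvd)
  moreover have "\<not> p ^ (V + 1) dvd N"
    using \<open>N \<noteq> 0\<close> p by (subst power_dvd_iff_le_multiplicity) (auto simp: mult_N)
  moreover have "(\<Prod>j<s. int (a + j * d)) = int N" by (simp add: N_def)
  ultimately show "int p ^ V dvd (\<Prod>j<s. int (a + j * d))"
    and "\<not> int p ^ (V + 1) dvd (\<Prod>j<s. int (a + j * d))"
    by (simp_all flip: of_nat_power of_nat_mult add: of_nat_dvd_iff)
qed

section \<open>Functions of \<open>|A - B|\<close> and superset indicators\<close>

definition scale_fun :: "rat \<Rightarrow> ('a \<Rightarrow> rat) \<Rightarrow> 'a \<Rightarrow> rat" where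
  "scale_fun c f x = c * f x"

interpretation fun_space: vector_space scale_fun
  by unfold_locales (auto simp: scale_fun_def fun_eq_iff algebra_simps)

definition superset_indicator :: "'a set \<Rightarrow> 'a set \<Rightarrow> rat" where
  "superset_indicator S B = (if S \<subseteq> B then 1 else 0)"

definition superset_indicators :: "'a set \<Rightarrow> nat \<Rightarrow> ('a set \<Rightarrow> rat) set" where
  "superset_indicators X r = superset_indicator ` {S. S \<subseteq> X \<and> card S \<le> r}"

lemma sum_fun_apply: "(sum f A) x = (\<Sum>a\<in>A. f a x)"
  for f :: "'b \<Rightarrow> 'c \<Rightarrow> 'd::comm_monoid_add"
  by (induction A rule: infinite_finite_induct) auto

lemma of_nat_card_Diff_eq_sum:
  assumes "finite A"
  shows "(of_nat (card (A - B)) :: 'a::comm_ring_1) = (\<Sum>x\<in>A. 1 - of_bool (x \<in> B))"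
  using assms by (induction A rule: finite_induct) (auto simp: insert_Diff_if)

lemma finite_superset_indicators: "finite X \<Longrightarrow> finite (superset_indicators X r)"
  unfolding superset_indicators_def by simp

lemma card_superset_indicators_le:
  assumes "finite X"
  shows "card (superset_indicators X r) \<le> (\<Sum>i\<le>r. card X choose i)"
proof -
  have "card (superset_indicators X r) \<le> card {S. S \<subseteq> X \<and> card S \<le> r}"
    unfolding superset_indicators_def by (rule card_image_le) (simp add: assms)
  also have "{S. S \<subseteq> X \<and> card S \<le> r} = (\<Union>i\<le>r. {S. S \<subseteq> X \<and> card S = i})" by auto
  also have "card \<dots> \<le> (\<Sum>i\<le>r. card {S. S \<subseteq> X \<and> card S = i})" by (rule card_UN_le) simp
  also have "\<dots> = (\<Sum>i\<le>r. card X choose i)" using assms by (simp add: n_subsets)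
  finally show ?thesis .
qed

text \<open>Since \<open>|A - B| = \<Sum>x\<in>A. (1 - [x \<in> B])\<close> and \<open>[S \<subseteq> B] (1 - [x \<in> B]) = [S \<subseteq> B] - [insert x S \<subseteq> B]\<close>,
  multiplying by \<open>|A - B| - c\<close> raises the size of the indicating sets by at most one.\<close>
lemma mult_card_Diff_in_span_superset_indicators:
  assumes "A \<subseteq> X" and "finite A" and "h \<in> fun_space.span (superset_indicators X r)"
  shows "(\<lambda>B. h B * (of_nat (card (A - B)) - c)) \<in> fun_space.span (superset_indicators X (Suc r))"
  using assms(3)
proof (induction rule: fun_space.span_induct_alt)
  case base
  then show ?case by (simp add: fun_space.span_zero flip: zero_fun_def)
next
  case (step c' f h)
  from step.hyps obtain S where S: "S \<subseteq> X" "card S \<le> r" and f: "f = superset_indicator S"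
    unfolding superset_indicators_def by auto
  have "card (insert x S) \<le> Suc r" for x
    using S(2) by (cases "finite S") (auto simp: card_insert_if)
  then have insert_in: "superset_indicator (insert x S) \<in> superset_indicators X (Suc r)"
    if "x \<in> A" for x
    using that S assms(1) unfolding superset_indicators_def by auto
  have f_in: "f \<in> superset_indicators X (Suc r)"
    using S unfolding f superset_indicators_def by auto
  have "(\<Sum>x\<in>A. f - superset_indicator (insert x S)) - scale_fun c f
      \<in> fun_space.span (superset_indicators X (Suc r))"
    by (intro fun_space.span_diff fun_space.span_sum fun_space.span_scale fun_space.span_base
        f_in insert_in)
  moreover have "(\<lambda>B. f B * (of_nat (card (A - B)) - c)) =
        (\<Sum>x\<in>A. f - superset_indicator (insert x S)) - scale_fun c f"
  proof
    fix B
    have "f B * (of_nat (card (A - B)) - c) = (\<Sum>x\<in>A. f B * (1 - of_bool (x \<in> B))) - c * f B"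
      by (simp add: of_nat_card_Diff_eq_sum[OF assms(2)] sum_distrib_left algebra_simps)
    also have "\<dots> = (\<Sum>x\<in>A. f B - superset_indicator (insert x S) B) - c * f B"
      by (intro arg_cong2[where f = "(-)"] sum.cong) (auto simp: f superset_indicator_def)
    finally show "f B * (of_nat (card (A - B)) - c) =
        ((\<Sum>x\<in>A. f - superset_indicator (insert x S)) - scale_fun c f) B"
      by (simp add: sum_fun_apply scale_fun_def)
  qed
  ultimately have "(\<lambda>B. f B * (of_nat (card (A - B)) - c)) \<in> fun_space.span (superset_indicators X (Suc r))"
    by simp
  then have "scale_fun c' (\<lambda>B. f B * (of_nat (card (A - B)) - c)) + (\<lambda>B. h B * (of_nat (card (A - B)) - c))
      \<in> fun_space.span (superset_indicators X (Suc r))"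
    using step.IH by (intro fun_space.span_add fun_space.span_scale)
  moreover have "(\<lambda>B. (scale_fun c' f + h) B * (of_nat (card (A - B)) - c)) =
      scale_fun c' (\<lambda>B. f B * (of_nat (card (A - B)) - c)) + (\<lambda>B. h B * (of_nat (card (A - B)) - c))"
    by (simp add: fun_eq_iff scale_fun_def algebra_simps)
  ultimately show ?case by simp
qed

lemma prod_card_Diff_in_span_superset_indicators:
  assumes "A \<subseteq> X" and "finite A"
  shows "(\<lambda>B. \<Prod>j<r. of_nat (card (A - B)) - \<beta> j) \<in> fun_space.span (superset_indicators X r)"
proof (induction r)
  case 0
  have "superset_indicator {} \<in> superset_indicators X 0" unfolding superset_indicators_def by auto
  moreover have "superset_indicator {} = (\<lambda>B. \<Prod>j<0. of_nat (card (A - B)) - \<beta> j)"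
    by (simp add: superset_indicator_def fun_eq_iff)
  ultimately show ?case by (metis fun_space.span_base)
next
  case (Suc r)
  then show ?case using mult_card_Diff_in_span_superset_indicators[OF assms] by simp
qed

section \<open>Nonsingularity from \<open>p\<close>-adic diagonal dominance\<close>

lemma inj_on_of_nonsingular:
  fixes g :: "'a \<Rightarrow> 'a \<Rightarrow> 'b::comm_ring_1"
  assumes "finite F"
    and nonsingular: "\<And>c. \<forall>B\<in>F. (\<Sum>A\<in>F. c A * g A B) = 0 \<Longrightarrow> \<forall>A\<in>F. c A = 0"
  shows "inj_on g F"
proof (rule inj_onI, rule ccontr)
  fix A A' assume A: "A \<in> F" "A' \<in> F" "g A = g A'" "A \<noteq> A'"
  define c :: "'a \<Rightarrow> 'b" where "c X = of_bool (X = A) - of_bool (X = A')" for X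
  have "(\<Sum>X\<in>F. c X * g X B) = g A B - g A' B" for B
    using A(1,2) assms(1) by (simp add: c_def left_diff_distrib sum_subtractf)
  then have "\<forall>B\<in>F. (\<Sum>X\<in>F. c X * g X B) = 0" using A(3) by simp
  then have "\<forall>A\<in>F. c A = 0" by (rule nonsingular)
  then show False using A by (auto simp: c_def)
qed

lemma card_le_card_of_nonsingular_in_span:
  fixes g :: "'a \<Rightarrow> 'a \<Rightarrow> rat"
  assumes "finite F" and "finite T" and "g ` F \<subseteq> fun_space.span T"
    and nonsingular: "\<And>c. \<forall>B\<in>F. (\<Sum>A\<in>F. c A * g A B) = 0 \<Longrightarrow> \<forall>A\<in>F. c A = 0"
  shows "card F \<le> card T"
proof -
  have inj: "inj_on g F" using assms(1) nonsingular by (rule inj_on_of_nonsingular)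
  have "fun_space.independent (g ` F)"
    unfolding fun_space.independent_explicit_finite_subsets
  proof (intro allI impI ballI)
    fix S u v
    assume SF: "S \<subseteq> g ` F" and "finite S" and su: "(\<Sum>v\<in>S. scale_fun (u v) v) = 0" and "v \<in> S"
    define c where "c A = (if g A \<in> S then u (g A) else 0)" for A
    have "\<forall>B\<in>F. (\<Sum>A\<in>F. c A * g A B) = 0"
    proof
      fix B assume "B \<in> F"
      have "(\<Sum>A\<in>F. c A * g A B) = (\<Sum>A\<in>F. if g A \<in> S then u (g A) * g A B else 0)"
        by (intro sum.cong) (simp_all add: c_def)
      also have "\<dots> = (\<Sum>A\<in>{A\<in>F. g A \<in> S}. u (g A) * g A B)"
        using assms(1) by (simp add: sum.inter_filter)
      also have "\<dots> = (\<Sum>w\<in>S. u w * w B)"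
        using SF inj by (intro sum.reindex_bij_betw) (auto simp: bij_betw_def inj_on_def)
      also have "\<dots> = 0" using fun_cong[OF su, of B] by (simp add: sum_fun_apply scale_fun_def)
      finally show "(\<Sum>A\<in>F. c A * g A B) = 0" .
    qed
    then have "\<forall>A\<in>F. c A = 0" by (rule nonsingular)
    then show "u v = 0" using SF \<open>v \<in> S\<close> by (force simp: c_def)
  qed
  then have "card (g ` F) \<le> card T"
    using fun_space.independent_span_bound[OF assms(2)] assms(3) by blast
  then show ?thesis using card_image[OF inj] by simp
qed

lemma prime_dvd_kernel_of_dominant_diagonal:
  fixes G :: "'a \<Rightarrow> 'a \<Rightarrow> int" and P :: int
  assumes "finite F" and P: "prime P"
    and off: "\<And>A B. A \<in> F \<Longrightarrow> B \<in> F \<Longrightarrow> A \<noteq> B \<Longrightarrow> P ^ (V + 1) dvd G A B"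
    and diag: "\<And>A. A \<in> F \<Longrightarrow> P ^ V dvd G A A \<and> \<not> P ^ (V + 1) dvd G A A"
    and kernel: "\<forall>B\<in>F. (\<Sum>A\<in>F. c A * G A B) = 0"
    and "A0 \<in> F"
  shows "P dvd c A0"
proof -
  obtain r where r: "G A0 A0 = P ^ V * r" using diag[OF \<open>A0 \<in> F\<close>] by blast
  then have "\<not> P dvd r" using diag[OF \<open>A0 \<in> F\<close>] by (auto simp: mult_dvd_mono)
  have "c A0 * G A0 A0 = - (\<Sum>A\<in>F - {A0}. c A * G A A0)"
    using kernel \<open>A0 \<in> F\<close> assms(1) by (simp add: sum.remove eq_neg_iff_add_eq_0)
  moreover have "P ^ (V + 1) dvd (\<Sum>A\<in>F - {A0}. c A * G A A0)"
    using off \<open>A0 \<in> F\<close> by (intro dvd_sum) auto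
  ultimately have "P ^ V * P dvd P ^ V * (c A0 * r)" by (simp add: r algebra_simps)
  then have "P dvd c A0 * r" using P by simp
  then show ?thesis using \<open>\<not> P dvd r\<close> P prime_dvd_mult_iff by blast
qed

text \<open>Infinite descent: a kernel vector is divisible by every power of \<open>P\<close>.\<close>
lemma kernel_trivial_of_dominant_diagonal:
  fixes G :: "'a \<Rightarrow> 'a \<Rightarrow> int" and P :: int
  assumes "finite F" and P: "prime P"
    and off: "\<And>A B. A \<in> F \<Longrightarrow> B \<in> F \<Longrightarrow> A \<noteq> B \<Longrightarrow> P ^ (V + 1) dvd G A B"
    and diag: "\<And>A. A \<in> F \<Longrightarrow> P ^ V dvd G A A \<and> \<not> P ^ (V + 1) dvd G A A"
    and kernel: "\<forall>B\<in>F. (\<Sum>A\<in>F. c A * G A B) = 0"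
  shows "\<forall>A\<in>F. c A = 0"
proof -
  have dvd_all: "\<forall>A\<in>F. P ^ K dvd c A" for K
    using kernel
  proof (induction K arbitrary: c)
    case 0
    then show ?case by simp
  next
    case (Suc K)
    define c' where "c' A = c A div P" for A
    have c: "c A = P * c' A" if "A \<in> F" for A
      using prime_dvd_kernel_of_dominant_diagonal[OF assms(1-4) Suc.prems that] by (simp add: c'_def)
    have "\<forall>B\<in>F. (\<Sum>A\<in>F. c' A * G A B) = 0"
    proof
      fix B assume "B \<in> F"
      have "P * (\<Sum>A\<in>F. c' A * G A B) = (\<Sum>A\<in>F. c A * G A B)"
        by (simp add: sum_distrib_left c mult.assoc)
      then show "(\<Sum>A\<in>F. c' A * G A B) = 0" using Suc.prems \<open>B \<in> F\<close> P by auto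
    qed
    then show ?case using Suc.IH c by (simp add: mult_dvd_mono)
  qed
  show ?thesis
  proof (rule ballI, rule ccontr)
    fix A assume "A \<in> F" and "c A \<noteq> 0"
    then have "finite {K. P ^ K dvd c A}" using P by (intro finite_divisor_powers) auto
    moreover have "{K. P ^ K dvd c A} = UNIV" using dvd_all \<open>A \<in> F\<close> by blast
    ultimately show False by simp
  qed
qed

lemma rat_kernel_trivial_of_int_kernel_trivial:
  fixes G :: "'a \<Rightarrow> 'a \<Rightarrow> int" and c :: "'a \<Rightarrow> rat"
  assumes fin: "finite F"
    and int_kernel: "\<And>c. \<forall>B\<in>F. (\<Sum>A\<in>F. c A * G A B) = 0 \<Longrightarrow> \<forall>A\<in>F. c A = 0"
    and kernel: "\<forall>B\<in>F. (\<Sum>A\<in>F. c A * of_int (G A B)) = 0"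
  shows "\<forall>A\<in>F. c A = 0"
proof -
  define den where "den A = snd (quotient_of (c A))" for A
  define D where "D = (\<Prod>A\<in>F. den A)"
  have den_pos: "den A > 0" for A unfolding den_def by (rule quotient_of_denom_pos')
  then have "D > 0" unfolding D_def by (simp add: prod_pos)
  have "\<exists>z. of_int z = of_int D * c A" if "A \<in> F" for A
  proof -
    have cA: "c A = of_int (fst (quotient_of (c A))) / of_int (den A)"
      unfolding den_def by (rule quotient_of_div) simp
    have "den A dvd D" unfolding D_def using fin that by auto
    then obtain t where "D = den A * t" by (elim dvdE)
    then have "of_int (fst (quotient_of (c A)) * t) = of_int D * c A"
      using den_pos[of A] by (subst cA) (simp add: field_simps)
    then show ?thesis by blast
  qed
  then obtain z where z: "\<And>A. A \<in> F \<Longrightarrow> of_int (z A) = of_int D * c A" by metis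
  have "\<forall>B\<in>F. (\<Sum>A\<in>F. z A * G A B) = 0"
  proof
    fix B assume "B \<in> F"
    have "(of_int (\<Sum>A\<in>F. z A * G A B) :: rat) = of_int D * (\<Sum>A\<in>F. c A * of_int (G A B))"
      by (simp add: z sum_distrib_left mult.assoc)
    also have "\<dots> = 0" using kernel \<open>B \<in> F\<close> by simp
    finally show "(\<Sum>A\<in>F. z A * G A B) = 0" by (simp only: of_int_eq_0_iff)
  qed
  then have "\<forall>A\<in>F. z A = 0" by (rule int_kernel)
  then have "\<forall>A\<in>F. (of_int D :: rat) * c A = 0" using z by (simp flip: z)
  then show ?thesis using \<open>D > 0\<close> by simp
qed

lemma card_le_sum_choose_of_prime_power_separated:
  fixes P :: int and \<beta> :: "nat \<Rightarrow> int" and F :: "'a set set"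
  assumes P: "prime P" and X: "finite X" and F: "F \<subseteq> Pow X"
    and off: "\<And>A B. A \<in> F \<Longrightarrow> B \<in> F \<Longrightarrow> A \<noteq> B \<Longrightarrow>
                P ^ (V + 1) dvd (\<Prod>j<s. int (card (A - B)) - \<beta> j)"
    and diag: "P ^ V dvd (\<Prod>j<s. \<beta> j)" "\<not> P ^ (V + 1) dvd (\<Prod>j<s. \<beta> j)"
  shows "card F \<le> (\<Sum>i\<le>s. card X choose i)"
proof -
  define G :: "'a set \<Rightarrow> 'a set \<Rightarrow> int" where "G A B = (\<Prod>j<s. int (card (A - B)) - \<beta> j)" for A B
  have finF: "finite F" using F X by (meson finite_Pow_iff finite_subset)
  have "G A A = (-1) ^ s * (\<Prod>j<s. \<beta> j)" for A by (simp add: G_def prod_uminus)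
  then have diag_G: "P ^ V dvd G A A \<and> \<not> P ^ (V + 1) dvd G A A" for A
    using diag by (cases "even s") auto
  have int_kernel: "\<forall>A\<in>F. c A = 0" if "\<forall>B\<in>F. (\<Sum>A\<in>F. c A * G A B) = 0" for c :: "'a set \<Rightarrow> int"
    using kernel_trivial_of_dominant_diagonal[OF finF P _ diag_G that] off by (simp add: G_def)
  have "(\<lambda>A B. of_int (G A B) :: rat) ` F \<subseteq> fun_space.span (superset_indicators X s)"
    using prod_card_Diff_in_span_superset_indicators[of _ X "\<lambda>j. of_int (\<beta> j)" s] F X
    by (auto simp: G_def finite_subset)
  then have "card F \<le> card (superset_indicators X s)"
    by (rule card_le_card_of_nonsingular_in_span[OF finF finite_superset_indicators[OF X]])
      (rule rat_kernel_trivial_of_int_kernel_trivial[OF finF int_kernel])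
  then show ?thesis using card_superset_indicators_le[OF X, of s] by linarith
qed

theorem mainTheorem3:
  fixes p q k a d s n :: nat and F :: "nat set set"
  assumes "prime p" and "k \<ge> 1" and "q = p ^ k"
    and "a > 0" and "d > 0" and "s \<ge> 1"
    and "L = {a + i * d | i. i < s}"
    and "L \<subseteq> {1..q - 1}"
    and "modular_L_differencing_sperner n q L F"
    and "(\<Sum>l\<in>L. multiplicity p l) <
           max ((s - 1) * multiplicity p d + multiplicity p q)
               (s * multiplicity p d + multiplicity p (fact s) + 1)"
  shows "card F \<le> (\<Sum>i\<le>s. n choose i)"
proof -
  define V where "V = (\<Sum>i<s. multiplicity p (a + i * d))"
  have L: "L = (\<lambda>i. a + i * d) ` {..<s}" using assms(7) by auto
  have "(\<Sum>l\<in>L. multiplicity p l) = V"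
    unfolding L V_def using assms(5) by (subst sum.reindex) (auto intro: inj_onI)
  then have hyp: "V < max ((s - 1) * multiplicity p d + k)
                          (s * multiplicity p d + multiplicity p (fact s) + 1)"
    using assms(1,3,10) by simp
  have lt: "l < p ^ k" if "l \<in> L" for l
    unfolding assms(3)[symmetric] using subsetD[OF assms(8) that] by auto
  have below: "a + (s - 1) * d < p ^ k"
    using assms(6) by (intro lt, unfold L, intro imageI) simp
  have sep: "int p ^ (V + 1) dvd (\<Prod>j<s. int (card (A - B)) - int (a + j * d))"
    if "A \<in> F" "B \<in> F" "A \<noteq> B" for A B
  proof -
    have "in_mod (card (A - B)) L q"
      using assms(9) that unfolding modular_L_differencing_sperner_def by blast
    then obtain i0 where "i0 < s" "[card (A - B) = a + i0 * d] (mod p ^ k)"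
      unfolding in_mod_def L assms(3) by blast
    from prime_power_dvd_prod_progression[OF assms(1,4,5,6) below hyp[unfolded V_def] this]
    show ?thesis unfolding V_def .
  qed
  note diag =
    prime_power_exactly_dvd_prod_progression[OF assms(1,4), where s = s and d = d, folded V_def]
  have "prime (int p)" using assms(1) by simp
  moreover have "F \<subseteq> Pow {1..n}"
    using assms(9) by (simp add: modular_L_differencing_sperner_def)
  ultimately show ?thesis
    using card_le_sum_choose_of_prime_power_separated[where X = "{1..n}" and F = F, OF _ _ _ sep diag]
    by simp
qed

end
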